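(* Let $(X(t),T(t))_{t\ge0}$ be the joint KMP–temperature process described in the context, with $X(0)$ and $T(0)$ independent, $X(0)$ distributed according to $\mu^X$ (product of independent exponential random variables of mean $1$ on $\mathbb R_+^{\overline{\mathbb V}}$), and $T(0)$ distributed according to an arbitrary probability measure $\nu$ on $\{s\in\mathbb R_+^{\overline{\mathbb V}}: s_j=T_j\ \forall j\in\partial\mathbb V\}$. Then for every $t\ge0$, $X(t)$ and $T(t)$ are independent, and the marginal process $(T(t))_{t\ge0}$ has the law of the opinion process $O$ with initial distribution $\nu$. In particular $(X(t),T(t))$ has law $\mu^X(d\underline x)\,[\nu e^{tL^O}](d\underline s)$, where $\nu e^{tL^O}$ denotes the law at time $t$ of the opinion process started from $\nu$.
   Context: Graph: $(\overline{\mathbb V},\overline E)$ is a finite oriented graph; $\overline{\mathbb V}=\mathbb V\cup\partial\mathbb V$ (disjoint; internal and boundary vertices). There is at most one edge between any pair of vertices and if $ij\in\overline E$ then $ji\notin\overline E$. $E$ is the set of edges with both endpoints in $\mathbb V$, $\partial E$ the set of edges with one endpoint in $\partial\mathbb V$; there are no edges between two boundary vertices, and every boundary edge is written $ij$ with $i\in\mathbb V$, $j\in\partial\mathbb V$. $\overline E=E\cup\partial E$. Each $j\in\partial\mathbb V$ carries a fixed temperature $T_j>0$. Joint KMP–temperature process $(X,T)$ on $\mathbb R_+^{\overline{\mathbb V}}\times\mathbb R_+^{\overline{\mathbb V}}$: generator $L^{X,T}f(X,T)=\sum_{ij\in E}\int_0^1du\,[f(H_{i,j;u}(X,T))-f(X,T)]+\sum_{ij\in\partial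 E}\int_0^\infty db\,e^{-b}\int_0^1du\,[f(H_{i,j;b,u}(X,T))-f(X,T)]$, where, writing $\bar T:=\frac{X_i}{X_i+X_j}T_i+\frac{X_j}{X_i+X_j}T_j$: $H_{i,j;u}$ sets $(X_i,T_i)\to(u(X_i+X_j),\bar T)$, $(X_j,T_j)\to((1-u)(X_i+X_j),\bar T)$ and leaves other coordinates unchanged; $H_{i,j;b,u}$ (for $j\in\partial\mathbb V$) sets $(X_i,T_i)\to(u(X_i+X_j),\bar T)$, $(X_j,T_j)\to(b,T_j)$ and leaves other coordinates unchanged. Opinion process $O$ with boundary conditions $T_{\partial\mathbb V}$: Markov process on $\mathbb R_+^{\overline{\mathbb V}}$ with $O_j\equiv T_j$ for $j\in\partial\mathbb V$ and generator $L^Of(O)=\sum_{ij\in\overline E}\int_0^1dv\,[f(H^O_{ij;v}O)-f(O)]$, where $(H^O_{ij;v}O)_\ell=vO_i+(1-v)O_j$ for $\ell\in\{i,j\}\cap\mathbb V$ and $(H^O_{ij;v}O)_\ell=O_\ell$ otherwise. *)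

theory Defs
  imports "HOL-Probability.Probability"
begin

text \<open>Vertices have type 'v. V = internal vertices, B = boundary vertices,
  Ebar = set of oriented edges (pairs (i,j)).  Tb = boundary temperatures.\<close>

definition graph_ok :: "'v set \<Rightarrow> 'v set \<Rightarrow> ('v \<times> 'v) set \<Rightarrow> bool" where
  "graph_ok V B Ebar \<longleftrightarrow> finite V \<and> finite B \<and> V \<inter> B = {} \<and>
     Ebar \<subseteq> (V \<union> B) \<times> (V \<union> B) \<and>
     (\<forall>i j. (i, j) \<in> Ebar \<longrightarrow> (j, i) \<notin> Ebar) \<and>
     (\<forall>i j. (i, j) \<in> Ebar \<longrightarrow> i \<in> V)"
  \<comment> \<open>no edges between two boundary vertices; every boundary edge is written ij with i internal, j boundary\<close>

definition bulk_edges :: "'v set \<Rightarrow> ('v \<times> 'v) set \<Rightarrow> ('v \<times> 'v) set" where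
  "bulk_edges V Ebar = {(i, j) \<in> Ebar. i \<in> V \<and> j \<in> V}"

definition bdry_edges :: "'v set \<Rightarrow> ('v \<times> 'v) set \<Rightarrow> ('v \<times> 'v) set" where
  "bdry_edges B Ebar = {(i, j) \<in> Ebar. j \<in> B}"

definition SX :: "'v set \<Rightarrow> 'v set \<Rightarrow> ('v \<Rightarrow> real) measure" where
  "SX V B = PiM (V \<union> B) (\<lambda>_. borel)"

definition SXT :: "'v set \<Rightarrow> 'v set \<Rightarrow> (('v \<Rightarrow> real) \<times> ('v \<Rightarrow> real)) measure" where
  "SXT V B = SX V B \<Otimes>\<^sub>M SX V B"

definition unif01 :: "real measure" where
  "unif01 = uniform_measure lborel {0..1}"

definition expo1 :: "real measure" where
  "expo1 = density lborel (exponential_density 1)"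

definition muX :: "'v set \<Rightarrow> 'v set \<Rightarrow> ('v \<Rightarrow> real) measure" where
  "muX V B = PiM (V \<union> B) (\<lambda>_. expo1)"

definition Tbar :: "('v \<Rightarrow> real) \<Rightarrow> ('v \<Rightarrow> real) \<Rightarrow> 'v \<Rightarrow> 'v \<Rightarrow> real" where
  "Tbar x s i j = x i / (x i + x j) * s i + x j / (x i + x j) * s j"

definition H_bulk :: "'v \<Rightarrow> 'v \<Rightarrow> real \<Rightarrow> ('v \<Rightarrow> real) \<times> ('v \<Rightarrow> real)
    \<Rightarrow> ('v \<Rightarrow> real) \<times> ('v \<Rightarrow> real)" where
  "H_bulk i j u xs = (case xs of (x, s) \<Rightarrow>
     (x(i := u * (x i + x j), j := (1 - u) * (x i + x j)),
      s(i := Tbar x s i j, j := Tbar x s i j)))"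

definition H_bdry :: "'v \<Rightarrow> 'v \<Rightarrow> real \<Rightarrow> real \<Rightarrow> ('v \<Rightarrow> real) \<times> ('v \<Rightarrow> real)
    \<Rightarrow> ('v \<Rightarrow> real) \<times> ('v \<Rightarrow> real)" where
  "H_bdry i j b u xs = (case xs of (x, s) \<Rightarrow>
     (x(i := u * (x i + x j), j := b), s(i := Tbar x s i j)))"

definition H_op :: "'v set \<Rightarrow> 'v \<Rightarrow> 'v \<Rightarrow> real \<Rightarrow> ('v \<Rightarrow> real) \<Rightarrow> ('v \<Rightarrow> real)" where
  "H_op V i j v s = (\<lambda>l. if l \<in> {i, j} \<inter> V then v * s i + (1 - v) * s j else s l)"

text \<open>Every edge rings at rate 1 (for boundary edges of the joint process the
  rate is the integral of e^{-b} db du = 1).  Uniformization with rate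
  Lambda = |Ebar| + 1: at each Poisson(Lambda) clock ring a uniformly chosen element
  of {None} \<union> Some ` Ebar is picked; None means no move.\<close>

definition unif_rate :: "('v \<times> 'v) set \<Rightarrow> real" where
  "unif_rate Ebar = real (card Ebar) + 1"

definition K_XT :: "'v set \<Rightarrow> 'v set \<Rightarrow> ('v \<times> 'v) set \<Rightarrow>
    ('v \<Rightarrow> real) \<times> ('v \<Rightarrow> real) \<Rightarrow> (('v \<Rightarrow> real) \<times> ('v \<Rightarrow> real)) measure" where
  "K_XT V B Ebar xs = measure_pmf (pmf_of_set (insert None (Some ` Ebar))) \<bind>
     (\<lambda>oe. case oe of
        None \<Rightarrow> return (SXT V B) xs
      | Some (i, j) \<Rightarrow>
          (if j \<in> B then distr (expo1 \<Otimes>\<^sub>M unif01) (SXT V B) (\<lambda>(b, u). H_bdry i j b u xs)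
           else distr unif01 (SXT V B) (\<lambda>u. H_bulk i j u xs)))"

definition K_O :: "'v set \<Rightarrow> 'v set \<Rightarrow> ('v \<times> 'v) set \<Rightarrow>
    ('v \<Rightarrow> real) \<Rightarrow> ('v \<Rightarrow> real) measure" where
  "K_O V B Ebar s = measure_pmf (pmf_of_set (insert None (Some ` Ebar))) \<bind>
     (\<lambda>oe. case oe of
        None \<Rightarrow> return (SX V B) s
      | Some (i, j) \<Rightarrow> distr unif01 (SX V B) (\<lambda>v. H_op V i j v s))"

definition poisson_meas :: "real \<Rightarrow> nat measure" where
  "poisson_meas r = density (count_space UNIV) (\<lambda>n. ennreal (r ^ n / fact n * exp (- r)))"

text \<open>Markov semigroup e^{tL} acting on probability measures: the law at time t of
  the uniformized jump process with kernel K and rate Lambda, started from mu.\<close>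
definition semigroup :: "real \<Rightarrow> ('s \<Rightarrow> 's measure) \<Rightarrow> real \<Rightarrow> 's measure \<Rightarrow> 's measure" where
  "semigroup Lam K t mu = poisson_meas (Lam * t) \<bind> (\<lambda>n. ((\<lambda>M. M \<bind> K) ^^ n) mu)"

definition P_XT :: "'v set \<Rightarrow> 'v set \<Rightarrow> ('v \<times> 'v) set \<Rightarrow> real \<Rightarrow>
    (('v \<Rightarrow> real) \<times> ('v \<Rightarrow> real)) measure \<Rightarrow> (('v \<Rightarrow> real) \<times> ('v \<Rightarrow> real)) measure" where
  "P_XT V B Ebar t mu = semigroup (unif_rate Ebar) (K_XT V B Ebar) t mu"

definition P_O :: "'v set \<Rightarrow> 'v set \<Rightarrow> ('v \<times> 'v) set \<Rightarrow> real \<Rightarrow>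
    ('v \<Rightarrow> real) measure \<Rightarrow> ('v \<Rightarrow> real) measure" where
  "P_O V B Ebar t mu = semigroup (unif_rate Ebar) (K_O V B Ebar) t mu"

text \<open>For a Markov process with transition laws (P t) (started at a point y via return),
  fdd_chain P [(t1,f1),...,(tk,fk)] tau y = E_y[ f1(Y(t1-tau)) ... fk(Y(tk-tau)) ].
  Integrating against the initial law at tau = 0 gives E[prod_i f_i(Y(t_i))], which
  for nonnegative measurable f_i determines the finite-dimensional distributions.\<close>
fun fdd_chain :: "(real \<Rightarrow> 's measure \<Rightarrow> 's measure) \<Rightarrow> 's measure \<Rightarrow>
    (real \<times> ('s \<Rightarrow> ennreal)) list \<Rightarrow> real \<Rightarrow> 's \<Rightarrow> ennreal" where
  "fdd_chain P S [] tau y = 1"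
| "fdd_chain P S ((t, f) # rest) tau y =
     (\<integral>\<^sup>+ z. f z * fdd_chain P S rest t z \<partial>(P (t - tau) (return S y)))"

end

theory Submission
  imports Defs
begin

(* Let a = X_i and b = X_j be the energies on an edge before an exchange. The new temperatures
   are exactly an opinion update with weight a / (a + b), while the new energies are u (a + b) and
   (1 - u) (a + b) (at a boundary edge: u (a + b) and a fresh Exp(1) value). By the beta-gamma
   algebra, if a, b are independent Exp(1) and u is uniform on [0, 1], then u (a + b),
   (1 - u) (a + b) and a / (a + b) are independent with laws Exp(1), Exp(1) and uniform. Hence one
   step of the joint chain started from muX (x) delta_s has law muX (x) (one opinion step from s).
   This intertwining survives mixing over s, iteration and Poisson uniformization, and, by the
   Markov property, it extends to all finite-dimensional distributions. *)

lemma measurable_Pair3_compose_split[measurable_dest]: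
  assumes "(\<lambda>(x, y, z). f x y z) \<in> M1 \<Otimes>\<^sub>M M2 \<Otimes>\<^sub>M M3 \<rightarrow>\<^sub>M N"
    and "g1 \<in> M \<rightarrow>\<^sub>M M1" "g2 \<in> M \<rightarrow>\<^sub>M M2" "g3 \<in> M \<rightarrow>\<^sub>M M3"
  shows "(\<lambda>x. f (g1 x) (g2 x) (g3 x)) \<in> M \<rightarrow>\<^sub>M N"
  using measurable_compose[OF measurable_Pair[OF assms(2) measurable_Pair[OF assms(3,4)]] assms(1)] by simp

lemma measurable_fun_upd_PiM [measurable (raw)]:
  assumes "i \<in> I" "f \<in> N \<rightarrow>\<^sub>M Pi\<^sub>M I M" "h \<in> N \<rightarrow>\<^sub>M M i"
  shows "(\<lambda>x. (f x)(i := h x)) \<in> N \<rightarrow>\<^sub>M Pi\<^sub>M I M"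
  using measurable_fun_upd[of I I i f N M h] assms by (simp add: insert_absorb)

lemma (in product_sigma_finite) product_nn_integral_insert_insert:
  assumes "finite I" "i \<notin> I" "j \<notin> I" "i \<noteq> j"
    and f: "f \<in> borel_measurable (Pi\<^sub>M (insert j (insert i I)) M)"
  shows "integral\<^sup>N (Pi\<^sub>M (insert j (insert i I)) M) f =
    (\<integral>\<^sup>+x. \<integral>\<^sup>+a. \<integral>\<^sup>+b. f (x(i := a, j := b)) \<partial>M j \<partial>M i \<partial>Pi\<^sub>M I M)"
proof -
  have "(\<lambda>(x, b). f (x(j := b))) \<in> borel_measurable (Pi\<^sub>M (insert i I) M \<Otimes>\<^sub>M M j)"
    using measurable_compose[OF measurable_add_dim f] by (simp add: split_beta')
  then have "(\<lambda>x. \<integral>\<^sup>+b. f (x(j := b)) \<partial>M j) \<in> borel_measurable (Pi\<^sub>M (insert i I) M)"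
    by (rule sigma_finite_measure.borel_measurable_nn_integral[OF sigma_finite_measures])
  then show ?thesis
    using assms by (simp add: product_nn_integral_insert)
qed

lemma subprob_space_distr_prob_space:
  assumes "prob_space M" "space N \<noteq> {}"
  shows "subprob_space (distr M N f)"
proof (rule subprob_spaceI)
  show "emeasure (distr M N f) (space (distr M N f)) \<le> 1"
    using prob_space.emeasure_le_1[OF assms(1)]
    by (simp add: distr_def emeasure_measure_of_conv)
qed (use assms(2) in simp)

lemma prob_algebra_cong: "sets M = sets N \<Longrightarrow> prob_algebra M = prob_algebra N"
  by (simp add: prob_algebra_def cong: subprob_algebra_cong)

lemma nn_integral_pair_return:
  assumes s: "s \<in> space S" and f: "f \<in> borel_measurable (N \<Otimes>\<^sub>M S)"
  shows "(\<integral>\<^sup>+w. f w \<partial>(N \<Otimes>\<^sub>M return S s)) = (\<integral>\<^sup>+x. f (x, s) \<partial>N)"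
proof -
  interpret return: prob_space "return S s"
    by (rule prob_space_return[OF s])
  have "f \<in> borel_measurable (N \<Otimes>\<^sub>M return S s)"
    using f by (simp cong: measurable_cong_sets[OF sets_pair_measure_cong[OF refl sets_return]])
  then have "(\<integral>\<^sup>+w. f w \<partial>(N \<Otimes>\<^sub>M return S s)) = (\<integral>\<^sup>+x. \<integral>\<^sup>+y. f (x, y) \<partial>return S s \<partial>N)"
    by (rule return.nn_integral_fst[symmetric])
  also have "\<dots> = (\<integral>\<^sup>+x. f (x, s) \<partial>N)"
    by (rule nn_integral_cong) (simp add: nn_integral_return[OF s measurable_Pair2[OF f]])
  finally show ?thesis .
qed

lemma nn_integral_bind_pair_return:
  assumes s: "s \<in> space S" and K: "K \<in> N \<Otimes>\<^sub>M S \<rightarrow>\<^sub>M subprob_algebra R" and g: "g \<in> borel_measurable R"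
  shows "(\<integral>\<^sup>+z. g z \<partial>((N \<Otimes>\<^sub>M return S s) \<bind> K)) = (\<integral>\<^sup>+x. \<integral>\<^sup>+z. g z \<partial>K (x, s) \<partial>N)"
proof -
  have "K \<in> N \<Otimes>\<^sub>M return S s \<rightarrow>\<^sub>M subprob_algebra R"
    using K by (simp cong: measurable_cong_sets[OF sets_pair_measure_cong[OF refl sets_return]])
  then have "(\<integral>\<^sup>+z. g z \<partial>((N \<Otimes>\<^sub>M return S s) \<bind> K)) = (\<integral>\<^sup>+w. \<integral>\<^sup>+z. g z \<partial>K w \<partial>(N \<Otimes>\<^sub>M return S s))"
    by (rule nn_integral_bind[OF g])
  also have "\<dots> = (\<integral>\<^sup>+x. \<integral>\<^sup>+z. g z \<partial>K (x, s) \<partial>N)"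
    by (rule nn_integral_pair_return[OF s measurable_compose[OF K nn_integral_measurable_subprob_algebra[OF g]]])
  finally show ?thesis .
qed

lemma emeasure_pair_measure_prob_space:
  assumes "prob_space N" "prob_space M" "A \<in> sets (N \<Otimes>\<^sub>M M)"
  shows "emeasure (N \<Otimes>\<^sub>M M) A = (\<integral>\<^sup>+y. emeasure N ((\<lambda>x. (x, y)) -` A) \<partial>M)"
proof -
  interpret N: prob_space N
    by (rule assms(1))
  interpret M: prob_space M
    by (rule assms(2))
  interpret pair_sigma_finite N M ..
  show ?thesis
    using assms(3) by (rule emeasure_pair_measure_alt2)
qed

lemma pair_measure_bind:
  assumes N: "prob_space N" and M: "prob_space M" and Q: "Q \<in> M \<rightarrow>\<^sub>M prob_algebra S"
  shows "N \<Otimes>\<^sub>M (M \<bind> Q) = M \<bind> (\<lambda>y. N \<Otimes>\<^sub>M Q y)"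
proof (rule measure_eqI)
  have M_in: "M \<in> space (prob_algebra M)"
    using M by (simp add: space_prob_algebra)
  have NQ: "(\<lambda>y. N \<Otimes>\<^sub>M Q y) \<in> M \<rightarrow>\<^sub>M prob_algebra (N \<Otimes>\<^sub>M S)"
    using N Q by (intro measurable_pair_prob measurable_const) (simp_all add: space_prob_algebra)
  have MQ: "prob_space (M \<bind> Q)" and sets_MQ: "sets (M \<bind> Q) = sets S"
    by (rule prob_space_bind'[OF M_in Q], rule sets_bind'[OF M_in Q])
  have sets_LHS: "sets (N \<Otimes>\<^sub>M (M \<bind> Q)) = sets (N \<Otimes>\<^sub>M S)"
    using sets_MQ by (rule sets_pair_measure_cong[OF refl])
  then show "sets (N \<Otimes>\<^sub>M (M \<bind> Q)) = sets (M \<bind> (\<lambda>y. N \<Otimes>\<^sub>M Q y))"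
    by (simp add: sets_bind'[OF M_in NQ])
  fix A assume "A \<in> sets (N \<Otimes>\<^sub>M (M \<bind> Q))"
  then have A: "A \<in> sets (N \<Otimes>\<^sub>M S)"
    using sets_LHS by simp
  have slice: "(\<lambda>y. emeasure N ((\<lambda>x. (x, y)) -` A)) \<in> borel_measurable S"
    using pair_sigma_finite.measurable_emeasure_Pair2[of N "M \<bind> Q" A] A sets_LHS sets_MQ N MQ
    by (simp add: pair_sigma_finite_def prob_space_imp_sigma_finite cong: measurable_cong_sets)
  have "emeasure (N \<Otimes>\<^sub>M (M \<bind> Q)) A = (\<integral>\<^sup>+y. emeasure N ((\<lambda>x. (x, y)) -` A) \<partial>(M \<bind> Q))"
    using A sets_LHS by (intro emeasure_pair_measure_prob_space N MQ) simp
  also have "\<dots> = (\<integral>\<^sup>+m. \<integral>\<^sup>+y. emeasure N ((\<lambda>x. (x, y)) -` A) \<partial>Q m \<partial>M)"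
    by (rule nn_integral_bind[OF slice measurable_prob_algebraD[OF Q]])
  also have "\<dots> = (\<integral>\<^sup>+m. emeasure (N \<Otimes>\<^sub>M Q m) A \<partial>M)"
    using A measurable_space[OF Q]
    by (intro nn_integral_cong emeasure_pair_measure_prob_space[symmetric] N)
      (auto simp: space_prob_algebra cong: sets_pair_measure_cong)
  also have "\<dots> = emeasure (M \<bind> (\<lambda>y. N \<Otimes>\<^sub>M Q y)) A"
    using A by (rule emeasure_bind_prob_algebra[OF M_in NQ, symmetric])
  finally show "emeasure (N \<Otimes>\<^sub>M (M \<bind> Q)) A = emeasure (M \<bind> (\<lambda>y. N \<Otimes>\<^sub>M Q y)) A" .
qed

lemma bind_pair_measure_intertwining:
  assumes N: "prob_space N" and KX: "KX \<in> N \<Otimes>\<^sub>M S \<rightarrow>\<^sub>M prob_algebra (N \<Otimes>\<^sub>M S)"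
    and KO: "KO \<in> S \<rightarrow>\<^sub>M prob_algebra S"
    and step: "\<And>s. s \<in> space S \<Longrightarrow> (N \<Otimes>\<^sub>M return S s) \<bind> KX = N \<Otimes>\<^sub>M KO s"
    and \<mu>: "\<mu> \<in> space (prob_algebra S)"
  shows "(N \<Otimes>\<^sub>M \<mu>) \<bind> KX = N \<Otimes>\<^sub>M (\<mu> \<bind> KO)"
proof -
  have \<mu>_prob: "prob_space \<mu>" and sets_\<mu>: "sets \<mu> = sets S"
    using \<mu> by (simp_all add: space_prob_algebra)
  have ret: "return S \<in> \<mu> \<rightarrow>\<^sub>M prob_algebra S"
    using sets_\<mu> by (simp cong: measurable_cong_sets)
  have NR: "(\<lambda>s. N \<Otimes>\<^sub>M return S s) \<in> \<mu> \<rightarrow>\<^sub>M prob_algebra (N \<Otimes>\<^sub>M S)"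
    using N ret by (intro measurable_pair_prob measurable_const) (simp_all add: space_prob_algebra)
  have "N \<Otimes>\<^sub>M \<mu> = \<mu> \<bind> (\<lambda>s. N \<Otimes>\<^sub>M return S s)"
    using pair_measure_bind[OF N \<mu>_prob ret] bind_return''[OF sets_\<mu>] by simp
  then have "(N \<Otimes>\<^sub>M \<mu>) \<bind> KX = \<mu> \<bind> (\<lambda>s. (N \<Otimes>\<^sub>M return S s) \<bind> KX)"
    using bind_assoc[OF measurable_prob_algebraD[OF NR] measurable_prob_algebraD[OF KX]] by simp
  also have "\<dots> = \<mu> \<bind> (\<lambda>s. N \<Otimes>\<^sub>M KO s)"
    using step sets_eq_imp_space_eq[OF sets_\<mu>] by (intro bind_cong) simp_all
  also have "\<dots> = N \<Otimes>\<^sub>M (\<mu> \<bind> KO)"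
    using KO sets_\<mu> by (intro pair_measure_bind[OF N \<mu>_prob, symmetric]) (simp cong: measurable_cong_sets)
  finally show ?thesis .
qed

section \<open>Uniformized jump chains\<close>

definition uniform_jump :: "'a measure \<Rightarrow> 'e set \<Rightarrow> ('e \<Rightarrow> 'a \<Rightarrow> 'a measure) \<Rightarrow> 'a \<Rightarrow> 'a measure" where
  "uniform_jump S E F x = measure_pmf (pmf_of_set (insert None (Some ` E))) \<bind>
     (\<lambda>oe. case oe of None \<Rightarrow> return S x | Some e \<Rightarrow> F e x)"

lemma measurable_uniform_jump_choice:
  assumes "x \<in> space S" "\<And>e. G e \<in> space (subprob_algebra S)"
  shows "(\<lambda>oe. case oe of None \<Rightarrow> return S x | Some e \<Rightarrow> G e) \<in> measure_pmf p \<rightarrow>\<^sub>M subprob_algebra S"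
  using assms measurable_space[OF return_measurable assms(1)] by (simp add: Pi_iff split: option.split)

lemma nn_integral_uniform_jump:
  assumes "finite E" "x \<in> space S" "\<And>e. F e x \<in> space (subprob_algebra S)" "g \<in> borel_measurable S"
  shows "(\<integral>\<^sup>+z. g z \<partial>uniform_jump S E F x) = (g x + (\<Sum>e\<in>E. \<integral>\<^sup>+z. g z \<partial>F e x)) / (1 + of_nat (card E))"
proof -
  let ?C = "insert None (Some ` E)"
  have "(\<integral>\<^sup>+z. g z \<partial>uniform_jump S E F x) =
      (\<integral>\<^sup>+oe. \<integral>\<^sup>+z. g z \<partial>(case oe of None \<Rightarrow> return S x | Some e \<Rightarrow> F e x) \<partial>measure_pmf (pmf_of_set ?C))"
    unfolding uniform_jump_def
    by (rule nn_integral_bind[OF assms(4) measurable_uniform_jump_choice[where G = "\<lambda>e. F e x", OF assms(2,3)]])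
  also have "\<dots> = (\<Sum>oe\<in>?C. \<integral>\<^sup>+z. g z \<partial>(case oe of None \<Rightarrow> return S x | Some e \<Rightarrow> F e x)) / of_nat (card ?C)"
    using assms(1) by (intro nn_integral_pmf_of_set) auto
  also have "\<dots> = (g x + (\<Sum>e\<in>E. \<integral>\<^sup>+z. g z \<partial>F e x)) / (1 + of_nat (card E))"
    using assms by (simp add: sum.reindex card_image nn_integral_return)
  finally show ?thesis .
qed

lemma uniform_jump_in_prob_algebra:
  assumes "finite E" "x \<in> space S" "\<And>e. e \<in> E \<Longrightarrow> F e x \<in> space (prob_algebra S)"
    and "\<And>e. F e x \<in> space (subprob_algebra S)"
  shows "uniform_jump S E F x \<in> space (prob_algebra S)"
  unfolding uniform_jump_def space_prob_algebra
proof (intro CollectI conjI)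
  show "sets (measure_pmf (pmf_of_set (insert None (Some ` E))) \<bind>
      (\<lambda>oe. case oe of None \<Rightarrow> return S x | Some e \<Rightarrow> F e x)) = sets S"
    using assms(2,4) by (intro sets_bind_measurable measurable_uniform_jump_choice) simp_all
  show "prob_space (measure_pmf (pmf_of_set (insert None (Some ` E))) \<bind>
      (\<lambda>oe. case oe of None \<Rightarrow> return S x | Some e \<Rightarrow> F e x))"
    using assms by (intro measure_pmf.prob_space_bind[where S = S] measurable_uniform_jump_choice)
      (auto simp: AE_measure_pmf_iff space_prob_algebra prob_space_return)
qed

lemma emeasure_uniform_jump:
  assumes "finite E" "x \<in> space S" "\<And>e. F e x \<in> space (subprob_algebra S)" "A \<in> sets S"
    and "sets (uniform_jump S E F x) = sets S"
  shows "emeasure (uniform_jump S E F x) A = (indicator A x + (\<Sum>e\<in>E. emeasure (F e x) A)) / (1 + of_nat (card E))"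
proof -
  have "emeasure (uniform_jump S E F x) A = (\<integral>\<^sup>+z. indicator A z \<partial>uniform_jump S E F x)"
    using assms(4,5) by simp
  also have "\<dots> = (indicator A x + (\<Sum>e\<in>E. \<integral>\<^sup>+z. indicator A z \<partial>F e x)) / (1 + of_nat (card E))"
    using assms(4) by (intro nn_integral_uniform_jump assms(1-3)) simp
  also have "\<dots> = (indicator A x + (\<Sum>e\<in>E. emeasure (F e x) A)) / (1 + of_nat (card E))"
    using assms(3,4) by (simp add: space_subprob_algebra)
  finally show ?thesis .
qed

lemma measurable_uniform_jump:
  assumes E: "finite E" and F: "\<And>e. e \<in> E \<Longrightarrow> F e \<in> S \<rightarrow>\<^sub>M prob_algebra S"
    and F_space: "\<And>e x. x \<in> space S \<Longrightarrow> F e x \<in> space (subprob_algebra S)"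
  shows "uniform_jump S E F \<in> S \<rightarrow>\<^sub>M prob_algebra S"
proof -
  have in_prob: "uniform_jump S E F x \<in> space (prob_algebra S)" if "x \<in> space S" for x
    using that measurable_space[OF F] by (intro uniform_jump_in_prob_algebra E F_space) auto
  show ?thesis
  proof (intro measurable_prob_algebraI measurable_subprob_algebra)
    fix A assume A: "A \<in> sets S"
    have "(\<lambda>x. (indicator A x + (\<Sum>e\<in>E. emeasure (F e x) A)) / (1 + of_nat (card E)) :: ennreal)
        \<in> borel_measurable S"
      using A F by (auto simp: divide_ennreal_def intro!: borel_measurable_times_ennreal borel_measurable_add
          borel_measurable_sum measurable_compose[OF measurable_prob_algebraD measurable_emeasure_subprob_algebra])
    then show "(\<lambda>x. emeasure (uniform_jump S E F x) A) \<in> borel_measurable S"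
      using A in_prob
      by (subst measurable_cong[OF emeasure_uniform_jump[OF E _ F_space]]) (auto simp: space_prob_algebra)
  qed (use in_prob in \<open>auto simp: space_prob_algebra intro: prob_space_imp_subprob_space\<close>)
qed

lemma sets_poisson_meas [measurable_cong]: "sets (poisson_meas r) = sets (count_space UNIV)"
  by (simp add: poisson_meas_def)

lemma prob_space_poisson_meas:
  assumes "0 \<le> r"
  shows "prob_space (poisson_meas r)"
proof
  have summable: "summable (\<lambda>n::nat. r ^ n / fact n)"
    using summable_exp by (simp add: field_simps divide_inverse[symmetric])
  have "(\<integral>\<^sup>+n. ennreal (r ^ n / fact n * exp (- r)) \<partial>count_space UNIV) =
      ennreal (exp (- r)) * (\<integral>\<^sup>+n. ennreal (r ^ n / fact n) \<partial>count_space UNIV)"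
    using assms by (simp add: nn_integral_cmult[symmetric] ennreal_mult'[symmetric] mult.commute)
  also have "(\<integral>\<^sup>+n. ennreal (r ^ n / fact n) \<partial>count_space UNIV) = ennreal (exp r)"
    using assms summable
    by (simp add: nn_integral_count_space_nat suminf_ennreal ennreal_suminf_neq_top exp_def field_simps
        divide_inverse[symmetric])
  also have "ennreal (exp (- r)) * ennreal (exp r) = 1"
    by (simp add: ennreal_mult[symmetric] mult_exp_exp)
  finally show "emeasure (poisson_meas r) (space (poisson_meas r)) = 1"
    by (simp add: poisson_meas_def emeasure_density)
qed

lemma poisson_meas_in_prob_algebra: "0 \<le> r \<Longrightarrow> poisson_meas r \<in> space (prob_algebra (count_space UNIV))"
  by (simp add: space_prob_algebra prob_space_poisson_meas sets_poisson_meas)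

lemma iterate_bind_in_prob_algebra:
  assumes K: "K \<in> S \<rightarrow>\<^sub>M prob_algebra S" and \<mu>: "\<mu> \<in> space (prob_algebra S)"
  shows "((\<lambda>M. M \<bind> K) ^^ n) \<mu> \<in> space (prob_algebra S)"
proof (induction n)
  case (Suc n)
  then show ?case
    using prob_space_bind'[OF Suc K] sets_bind'[OF Suc K] by (simp add: space_prob_algebra)
qed (simp add: \<mu>)

lemma semigroup_in_prob_algebra:
  assumes K: "K \<in> S \<rightarrow>\<^sub>M prob_algebra S" and "0 \<le> Lam * t" and \<mu>: "\<mu> \<in> space (prob_algebra S)"
  shows "semigroup Lam K t \<mu> \<in> space (prob_algebra S)"
proof -
  have Q: "(\<lambda>n. ((\<lambda>M. M \<bind> K) ^^ n) \<mu>) \<in> count_space UNIV \<rightarrow>\<^sub>M prob_algebra S"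
    using iterate_bind_in_prob_algebra[OF K \<mu>] by simp
  note P = poisson_meas_in_prob_algebra[OF \<open>0 \<le> Lam * t\<close>]
  show ?thesis
    unfolding semigroup_def using prob_space_bind'[OF P Q] sets_bind'[OF P Q]
    by (simp add: space_prob_algebra)
qed

lemma semigroup_intertwining:
  assumes N: "prob_space N" and KX: "KX \<in> N \<Otimes>\<^sub>M S \<rightarrow>\<^sub>M prob_algebra (N \<Otimes>\<^sub>M S)"
    and KO: "KO \<in> S \<rightarrow>\<^sub>M prob_algebra S"
    and step: "\<And>s. s \<in> space S \<Longrightarrow> (N \<Otimes>\<^sub>M return S s) \<bind> KX = N \<Otimes>\<^sub>M KO s"
    and "0 \<le> Lam * t" and \<mu>: "\<mu> \<in> space (prob_algebra S)"
  shows "semigroup Lam KX t (N \<Otimes>\<^sub>M \<mu>) = N \<Otimes>\<^sub>M semigroup Lam KO t \<mu>"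
proof -
  have iterate: "((\<lambda>M. M \<bind> KX) ^^ n) (N \<Otimes>\<^sub>M \<mu>) = N \<Otimes>\<^sub>M ((\<lambda>M. M \<bind> KO) ^^ n) \<mu>" for n
    by (induction n)
      (simp_all add: bind_pair_measure_intertwining[OF N KX KO step] iterate_bind_in_prob_algebra[OF KO \<mu>])
  have "(\<lambda>n. ((\<lambda>M. M \<bind> KO) ^^ n) \<mu>) \<in> poisson_meas (Lam * t) \<rightarrow>\<^sub>M prob_algebra S"
    using iterate_bind_in_prob_algebra[OF KO \<mu>] by (subst measurable_cong_sets[OF sets_poisson_meas refl]) auto
  from pair_measure_bind[OF N prob_space_poisson_meas[OF \<open>0 \<le> Lam * t\<close>] this]
  show ?thesis
    unfolding semigroup_def iterate by simp
qed

lemma measurable_iterate_bind_return: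
  assumes K: "K \<in> S \<rightarrow>\<^sub>M prob_algebra S"
  shows "(\<lambda>y. ((\<lambda>M. M \<bind> K) ^^ n) (return S y)) \<in> S \<rightarrow>\<^sub>M prob_algebra S"
  by (induction n) (simp_all add: measurable_bind_prob_space[OF _ K])

lemma iterate_bind_eq_bind_return:
  assumes K: "K \<in> S \<rightarrow>\<^sub>M prob_algebra S" and "sets \<mu> = sets S"
  shows "((\<lambda>M. M \<bind> K) ^^ n) \<mu> = \<mu> \<bind> (\<lambda>y. ((\<lambda>M. M \<bind> K) ^^ n) (return S y))"
proof (induction n)
  case 0
  then show ?case
    using bind_return''[OF \<open>sets \<mu> = sets S\<close>] by simp
next
  case (Suc n)
  have "(\<lambda>y. ((\<lambda>M. M \<bind> K) ^^ n) (return S y)) \<in> \<mu> \<rightarrow>\<^sub>M subprob_algebra S"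
    using measurable_prob_algebraD[OF measurable_iterate_bind_return[OF K]] \<open>sets \<mu> = sets S\<close>
    by (simp cong: measurable_cong_sets)
  from bind_assoc[OF this measurable_prob_algebraD[OF K]] show ?case
    using Suc by simp
qed

lemma measurable_iterate_bind_return_pair:
  assumes K: "K \<in> S \<rightarrow>\<^sub>M prob_algebra S"
  shows "(\<lambda>(n, y). ((\<lambda>M. M \<bind> K) ^^ n) (return S y)) \<in> count_space UNIV \<Otimes>\<^sub>M S \<rightarrow>\<^sub>M prob_algebra S"
  by (rule measurable_pair_measure_countable1) (simp_all add: measurable_iterate_bind_return[OF K])

lemma semigroup_eq_bind_return:
  assumes K: "K \<in> S \<rightarrow>\<^sub>M prob_algebra S" and "0 \<le> Lam * t" and \<mu>: "\<mu> \<in> space (prob_algebra S)"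
  shows "semigroup Lam K t \<mu> = \<mu> \<bind> (\<lambda>y. semigroup Lam K t (return S y))"
proof -
  have sets_\<mu>: "sets \<mu> = sets S"
    using \<mu> by (simp add: space_prob_algebra)
  interpret pair_prob_space "poisson_meas (Lam * t)" \<mu>
    using prob_space_poisson_meas[OF \<open>0 \<le> Lam * t\<close>] \<mu>
    by (simp add: pair_prob_space_def pair_sigma_finite_def prob_space_imp_sigma_finite space_prob_algebra)
  have "(\<lambda>(n, y). ((\<lambda>M. M \<bind> K) ^^ n) (return S y)) \<in> poisson_meas (Lam * t) \<Otimes>\<^sub>M \<mu> \<rightarrow>\<^sub>M subprob_algebra S"
    using measurable_prob_algebraD[OF measurable_iterate_bind_return_pair[OF K]]
    by (simp add: measurable_cong_sets[OF sets_pair_measure_cong[OF sets_poisson_meas sets_\<mu>] refl])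
  from bind_rotate[OF this] show ?thesis
    unfolding semigroup_def iterate_bind_eq_bind_return[OF K sets_\<mu>] by simp
qed

lemma measurable_semigroup_return:
  assumes K: "K \<in> S \<rightarrow>\<^sub>M prob_algebra S" and "0 \<le> Lam * t"
  shows "(\<lambda>y. semigroup Lam K t (return S y)) \<in> S \<rightarrow>\<^sub>M prob_algebra S"
  unfolding semigroup_def
proof (rule measurable_bind_prob_space2)
  show "(\<lambda>y. poisson_meas (Lam * t)) \<in> S \<rightarrow>\<^sub>M prob_algebra (count_space UNIV)"
    using poisson_meas_in_prob_algebra[OF \<open>0 \<le> Lam * t\<close>] by simp
  show "(\<lambda>(y, n). ((\<lambda>M. M \<bind> K) ^^ n) (return S y)) \<in> S \<Otimes>\<^sub>M count_space UNIV \<rightarrow>\<^sub>M prob_algebra S"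
    using measurable_compose[OF measurable_pair_swap' measurable_iterate_bind_return_pair[OF K]]
    by (simp add: split_beta')
qed

section \<open>Exponential and uniform variables\<close>

lemma sets_unif01 [simp, measurable_cong]: "sets unif01 = sets borel"
  by (simp add: unif01_def)

lemma sets_expo1 [simp, measurable_cong]: "sets expo1 = sets borel"
  by (simp add: expo1_def)

lemma prob_space_unif01: "prob_space unif01"
  unfolding unif01_def by (rule prob_space_uniform_measure) auto

lemma prob_space_expo1: "prob_space expo1"
  unfolding expo1_def by (rule prob_space_exponential_density) simp

interpretation unif01: prob_space unif01
  by (rule prob_space_unif01)

interpretation expo1: prob_space expo1
  by (rule prob_space_expo1)

lemma sets_expo1_unif01 [measurable_cong]: "sets (expo1 \<Otimes>\<^sub>M unif01) = sets (borel \<Otimes>\<^sub>M borel)"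
  by (rule sets_pair_measure_cong) simp_all

interpretation unif01_pair: pair_prob_space unif01 unif01 ..

interpretation expo1_unif01: pair_prob_space expo1 unif01 ..

lemma unif01_in_prob_algebra [measurable]: "unif01 \<in> space (prob_algebra borel)"
  by (simp add: space_prob_algebra prob_space_unif01)

lemma expo1_unif01_in_prob_algebra [measurable]: "expo1 \<Otimes>\<^sub>M unif01 \<in> space (prob_algebra (borel \<Otimes>\<^sub>M borel))"
  by (simp add: space_prob_algebra prob_space_pair prob_space_unif01 prob_space_expo1 cong: sets_pair_measure_cong)

lemma nn_integral_unif01:
  assumes [measurable]: "f \<in> borel_measurable borel"
  shows "(\<integral>\<^sup>+u. f u \<partial>unif01) = (\<integral>\<^sup>+u. f u * indicator {0..1} u \<partial>lborel)"
  unfolding unif01_def by (subst nn_integral_uniform_measure) (auto simp: divide_ennreal_def)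

lemma nn_integral_expo1:
  assumes [measurable]: "f \<in> borel_measurable borel"
  shows "(\<integral>\<^sup>+a. f a \<partial>expo1) = (\<integral>\<^sup>+a. ennreal (exponential_density 1 a) * f a \<partial>lborel)"
  unfolding expo1_def by (subst nn_integral_density) auto

lemma AE_expo1_pos: "AE a in expo1. 0 < a"
proof -
  have "AE a in lborel. 0 < ennreal (exponential_density 1 a) \<longrightarrow> 0 < a"
    using AE_lborel_singleton[of 0]
    by eventually_elim (auto simp: exponential_density_def)
  then show ?thesis
    unfolding expo1_def by (subst AE_density) auto
qed

lemma nn_integral_expo1_pair_cong:
  assumes "\<And>a b. 0 < a \<Longrightarrow> 0 < b \<Longrightarrow> f a b = g a b"
  shows "(\<integral>\<^sup>+a. \<integral>\<^sup>+b. f a b \<partial>expo1 \<partial>expo1) = (\<integral>\<^sup>+a. \<integral>\<^sup>+b. g a b \<partial>expo1 \<partial>expo1)"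
  using AE_expo1_pos
proof (intro nn_integral_cong_AE, eventually_elim)
  case (elim a)
  show ?case
    using AE_expo1_pos by (intro nn_integral_cong_AE) (auto elim!: eventually_mono intro: assms[OF \<open>0 < a\<close>])
qed

lemma exponential_density_1_convolution:
  "ennreal (exponential_density 1 a) * ennreal (exponential_density 1 (s - a)) =
    ennreal (exp (- s)) * indicator {0..s} a"
  by (auto simp: exponential_density_def indicator_def ennreal_mult'[symmetric] exp_add[symmetric])

lemma borel_measurable_indicator_Icc_0 [measurable]:
  "(\<lambda>(s, a). indicator {0..s} a :: ennreal) \<in> borel_measurable (borel \<Otimes>\<^sub>M (borel :: real measure))"
proof -
  have "{w \<in> space (borel \<Otimes>\<^sub>M borel). 0 \<le> snd w \<and> snd w \<le> (fst w :: real)} \<in> sets (borel \<Otimes>\<^sub>M borel)"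
    by measurable
  from borel_measurable_indicator[OF this] show ?thesis
    by (rule measurable_cong[THEN iffD1, rotated]) (auto simp: indicator_def space_pair_measure)
qed

lemma nn_integral_expo1_pair_sum:
  assumes [measurable]: "(\<lambda>(a, b). h a b) \<in> borel_measurable (borel \<Otimes>\<^sub>M borel)"
  shows "(\<integral>\<^sup>+a. \<integral>\<^sup>+b. h a b \<partial>expo1 \<partial>expo1) =
    (\<integral>\<^sup>+s. \<integral>\<^sup>+a. ennreal (exp (- s)) * indicator {0..s} a * h a (s - a) \<partial>lborel \<partial>lborel)"
proof -
  have "(\<integral>\<^sup>+a. \<integral>\<^sup>+b. h a b \<partial>expo1 \<partial>expo1) =
      (\<integral>\<^sup>+a. \<integral>\<^sup>+b. ennreal (exponential_density 1 a) * ennreal (exponential_density 1 b) * h a b \<partial>lborel \<partial>lborel)"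
    by (simp add: nn_integral_expo1 nn_integral_cmult[symmetric] mult.assoc)
  also have "\<dots> = (\<integral>\<^sup>+a. \<integral>\<^sup>+s. ennreal (exp (- s)) * indicator {0..s} a * h a (s - a) \<partial>lborel \<partial>lborel)"
  proof (rule nn_integral_cong)
    fix a :: real
    show "(\<integral>\<^sup>+b. ennreal (exponential_density 1 a) * ennreal (exponential_density 1 b) * h a b \<partial>lborel) =
        (\<integral>\<^sup>+s. ennreal (exp (- s)) * indicator {0..s} a * h a (s - a) \<partial>lborel)"
      by (subst nn_integral_real_affine[where c = 1 and t = "- a"])
        (simp_all add: exponential_density_1_convolution[symmetric])
  qed
  also have "\<dots> = (\<integral>\<^sup>+s. \<integral>\<^sup>+a. ennreal (exp (- s)) * indicator {0..s} a * h a (s - a) \<partial>lborel \<partial>lborel)"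
    by (rule lborel_pair.Fubini') measurable
  finally show ?thesis .
qed

lemma nn_integral_Icc_unif01:
  assumes "0 < s" and [measurable]: "f \<in> borel_measurable borel"
  shows "(\<integral>\<^sup>+a. indicator {0..s} a * f a \<partial>lborel) = ennreal s * (\<integral>\<^sup>+u. f (u * s) \<partial>unif01)"
proof -
  have "indicator {0..s} (s * u) = (indicator {0..1} u :: ennreal)" for u
    using \<open>0 < s\<close> by (auto simp: indicator_def zero_le_mult_iff mult_le_cancel_left1)
  then show ?thesis
    using \<open>0 < s\<close>
    by (subst nn_integral_real_affine[where c = s and t = 0])
      (auto simp: nn_integral_unif01 mult.commute intro!: arg_cong2[where f = "(*)"] nn_integral_cong)
qed

text \<open>The sum \<open>s = a + b\<close> of two independent Exp(1) variables has the Gamma(2) density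
  \<open>s e\<^sup>-\<^sup>s\<close>, and given \<open>s\<close>, \<open>a\<close> is uniform on \<open>[0, s]\<close>.\<close>

lemma nn_integral_expo1_pair:
  assumes [measurable]: "(\<lambda>(a, b). h a b) \<in> borel_measurable (borel \<Otimes>\<^sub>M borel)"
  shows "(\<integral>\<^sup>+a. \<integral>\<^sup>+b. h a b \<partial>expo1 \<partial>expo1) =
    (\<integral>\<^sup>+s. ennreal (s * exp (- s)) * indicator {0<..} s * (\<integral>\<^sup>+u. h (u * s) ((1 - u) * s) \<partial>unif01) \<partial>lborel)"
  unfolding nn_integral_expo1_pair_sum[OF assms]
proof (rule nn_integral_cong)
  fix s :: real
  show "(\<integral>\<^sup>+a. ennreal (exp (- s)) * indicator {0..s} a * h a (s - a) \<partial>lborel) =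
      ennreal (s * exp (- s)) * indicator {0<..} s * (\<integral>\<^sup>+u. h (u * s) ((1 - u) * s) \<partial>unif01)"
  proof (cases "0 < s")
    case True
    have "(\<integral>\<^sup>+a. ennreal (exp (- s)) * indicator {0..s} a * h a (s - a) \<partial>lborel) =
        ennreal (exp (- s)) * (\<integral>\<^sup>+a. indicator {0..s} a * h a (s - a) \<partial>lborel)"
      by (subst nn_integral_cmult[symmetric]) (auto simp: mult.assoc)
    also have "\<dots> = ennreal (exp (- s)) * (ennreal s * (\<integral>\<^sup>+u. h (u * s) ((1 - u) * s) \<partial>unif01))"
      using True by (simp add: nn_integral_Icc_unif01 algebra_simps)
    finally show ?thesis
      using True by (simp add: ennreal_mult mult_ac)
  next
    case False
    have "AE a in lborel. indicator {0..s} a = (0 :: ennreal)"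
      using AE_lborel_singleton[of 0] by eventually_elim (use False in \<open>auto simp: indicator_def\<close>)
    then have "(\<integral>\<^sup>+a. ennreal (exp (- s)) * indicator {0..s} a * h a (s - a) \<partial>lborel) = 0"
      by (subst nn_integral_0_iff_AE) (auto elim!: eventually_mono)
    then show ?thesis
      using False by simp
  qed
qed

lemma nn_integral_expo1_resample:
  assumes [measurable]: "(\<lambda>(a, b, v). h a b v) \<in> borel_measurable (borel \<Otimes>\<^sub>M borel \<Otimes>\<^sub>M borel)"
  shows "(\<integral>\<^sup>+a. \<integral>\<^sup>+b. \<integral>\<^sup>+u. h (u * (a + b)) ((1 - u) * (a + b)) (a / (a + b)) \<partial>unif01 \<partial>expo1 \<partial>expo1) =
    (\<integral>\<^sup>+a. \<integral>\<^sup>+b. \<integral>\<^sup>+v. h a b v \<partial>unif01 \<partial>expo1 \<partial>expo1)"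
proof -
  define w :: "real \<Rightarrow> ennreal" where "w s = ennreal (s * exp (- s)) * indicator {0<..} s" for s
  have "(\<integral>\<^sup>+a. \<integral>\<^sup>+b. \<integral>\<^sup>+u. h (u * (a + b)) ((1 - u) * (a + b)) (a / (a + b)) \<partial>unif01 \<partial>expo1 \<partial>expo1) =
      (\<integral>\<^sup>+s. w s * (\<integral>\<^sup>+v. \<integral>\<^sup>+u. h (u * (v * s + (1 - v) * s)) ((1 - u) * (v * s + (1 - v) * s))
        (v * s / (v * s + (1 - v) * s)) \<partial>unif01 \<partial>unif01) \<partial>lborel)"
    unfolding w_def by (rule nn_integral_expo1_pair) measurable
  also have "\<dots> = (\<integral>\<^sup>+s. w s * (\<integral>\<^sup>+u. \<integral>\<^sup>+v. h (u * s) ((1 - u) * s) v \<partial>unif01 \<partial>unif01) \<partial>lborel)"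
  proof (rule nn_integral_cong)
    fix s :: real
    show "w s * (\<integral>\<^sup>+v. \<integral>\<^sup>+u. h (u * (v * s + (1 - v) * s)) ((1 - u) * (v * s + (1 - v) * s))
        (v * s / (v * s + (1 - v) * s)) \<partial>unif01 \<partial>unif01) =
      w s * (\<integral>\<^sup>+u. \<integral>\<^sup>+v. h (u * s) ((1 - u) * s) v \<partial>unif01 \<partial>unif01)"
    proof (cases "0 < s")
      case True
      then have "v * s + (1 - v) * s = s" "v * s / s = v" for v
        by (auto simp: algebra_simps)
      then show ?thesis
        by (simp add: unif01_pair.Fubini'[of "\<lambda>v u. h (u * s) ((1 - u) * s) v"])
    qed (simp add: w_def)
  qed
  also have "\<dots> = (\<integral>\<^sup>+a. \<integral>\<^sup>+b. \<integral>\<^sup>+v. h a b v \<partial>unif01 \<partial>expo1 \<partial>expo1)"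
    unfolding w_def by (rule nn_integral_expo1_pair[symmetric]) measurable
  finally show ?thesis .
qed

lemma nn_integral_expo1_resample_refresh:
  assumes [measurable]: "(\<lambda>(a, c, v). G a c v) \<in> borel_measurable (borel \<Otimes>\<^sub>M borel \<Otimes>\<^sub>M borel)"
  shows "(\<integral>\<^sup>+a. \<integral>\<^sup>+b. \<integral>\<^sup>+z. G (snd z * (a + b)) (fst z) (a / (a + b)) \<partial>(expo1 \<Otimes>\<^sub>M unif01) \<partial>expo1 \<partial>expo1) =
    (\<integral>\<^sup>+a. \<integral>\<^sup>+c. \<integral>\<^sup>+v. G a c v \<partial>unif01 \<partial>expo1 \<partial>expo1)"
proof -
  define h where "h a (b :: real) v = (\<integral>\<^sup>+c. G a c v \<partial>expo1)" for a b v
  have [measurable]: "(\<lambda>(a, b, v). h a b v) \<in> borel_measurable (borel \<Otimes>\<^sub>M borel \<Otimes>\<^sub>M borel)"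
    unfolding h_def by measurable
  have "(\<integral>\<^sup>+a. \<integral>\<^sup>+b. \<integral>\<^sup>+z. G (snd z * (a + b)) (fst z) (a / (a + b)) \<partial>(expo1 \<Otimes>\<^sub>M unif01) \<partial>expo1 \<partial>expo1) =
      (\<integral>\<^sup>+a. \<integral>\<^sup>+b. \<integral>\<^sup>+u. h (u * (a + b)) ((1 - u) * (a + b)) (a / (a + b)) \<partial>unif01 \<partial>expo1 \<partial>expo1)"
  proof (intro nn_integral_cong)
    fix a b :: real
    have "(\<lambda>z. G (snd z * (a + b)) (fst z) (a / (a + b))) \<in> borel_measurable (expo1 \<Otimes>\<^sub>M unif01)"
      by measurable
    from expo1_unif01.nn_integral_snd[OF this]
    show "(\<integral>\<^sup>+z. G (snd z * (a + b)) (fst z) (a / (a + b)) \<partial>(expo1 \<Otimes>\<^sub>M unif01)) =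
        (\<integral>\<^sup>+u. h (u * (a + b)) ((1 - u) * (a + b)) (a / (a + b)) \<partial>unif01)"
      by (simp add: h_def)
  qed
  also have "\<dots> = (\<integral>\<^sup>+a. \<integral>\<^sup>+b. \<integral>\<^sup>+v. h a b v \<partial>unif01 \<partial>expo1 \<partial>expo1)"
    by (rule nn_integral_expo1_resample) measurable
  also have "\<dots> = (\<integral>\<^sup>+a. \<integral>\<^sup>+v. \<integral>\<^sup>+c. G a c v \<partial>expo1 \<partial>unif01 \<partial>expo1)"
    by (simp add: h_def expo1.emeasure_space_1)
  also have "\<dots> = (\<integral>\<^sup>+a. \<integral>\<^sup>+c. \<integral>\<^sup>+v. G a c v \<partial>unif01 \<partial>expo1 \<partial>expo1)"
    by (intro nn_integral_cong expo1_unif01.Fubini') measurable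
  finally show ?thesis .
qed

lemma graph_okD:
  assumes "graph_ok V B Ebar"
  shows "finite (V \<union> B)" "finite Ebar" "V \<inter> B = {}"
    and "(i, j) \<in> Ebar \<Longrightarrow> i \<in> V \<and> j \<in> V \<union> B \<and> i \<noteq> j"
  using assms unfolding graph_ok_def
  by (auto intro: finite_subset[of Ebar "(V \<union> B) \<times> (V \<union> B)"])

lemma sets_SX [measurable_cong]: "sets (SX V B) = sets (Pi\<^sub>M (V \<union> B) (\<lambda>_. borel))"
  by (simp add: SX_def)

lemma sets_SXT [measurable_cong]: "sets (SXT V B) = sets (SX V B \<Otimes>\<^sub>M SX V B)"
  by (simp add: SXT_def)

lemma space_SX_not_empty: "space (SX V B) \<noteq> {}"
  by (simp add: SX_def space_PiM PiE_eq_empty_iff)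

lemma sets_muX [measurable_cong]: "sets (muX V B) = sets (SX V B)"
  unfolding muX_def SX_def by (intro sets_PiM_cong) auto

lemma space_muX: "space (muX V B) = space (SX V B)"
  by (rule sets_eq_imp_space_eq) (rule sets_muX)

lemma sets_muX_pair: "sets M = sets (SX V B) \<Longrightarrow> sets (muX V B \<Otimes>\<^sub>M M) = sets (SXT V B)"
  unfolding SXT_def by (intro sets_pair_measure_cong sets_muX)

lemma prob_space_muX: "prob_space (muX V B)"
  unfolding muX_def by (rule prob_space_PiM) (rule prob_space_expo1)

interpretation muX: prob_space "muX V B" for V B
  by (rule prob_space_muX)

interpretation muX_unif01: pair_prob_space "muX V B" unif01 for V B ..

lemma nn_integral_muX_eqI_pair:
  assumes "finite (V \<union> B)" "i \<in> V \<union> B" "j \<in> V \<union> B" "i \<noteq> j"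
    and "F1 \<in> borel_measurable (muX V B)" "F2 \<in> borel_measurable (muX V B)"
    and eq: "\<And>y. y \<in> space (SX V B) \<Longrightarrow>
      (\<integral>\<^sup>+a. \<integral>\<^sup>+b. F1 (y(i := a, j := b)) \<partial>expo1 \<partial>expo1) = (\<integral>\<^sup>+a. \<integral>\<^sup>+b. F2 (y(i := a, j := b)) \<partial>expo1 \<partial>expo1)"
  shows "(\<integral>\<^sup>+x. F1 x \<partial>muX V B) = (\<integral>\<^sup>+x. F2 x \<partial>muX V B)"
proof -
  interpret product_sigma_finite "\<lambda>_. expo1"
    by (simp add: product_sigma_finite_def expo1.sigma_finite_measure_axioms)
  define R where "R = V \<union> B - {i, j}"
  have VB: "V \<union> B = insert j (insert i R)"
    using assms by (auto simp: R_def)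
  have split: "(\<integral>\<^sup>+x. F x \<partial>muX V B) =
      (\<integral>\<^sup>+y. \<integral>\<^sup>+a. \<integral>\<^sup>+b. F (y(i := a, j := b)) \<partial>expo1 \<partial>expo1 \<partial>Pi\<^sub>M R (\<lambda>_. expo1))"
    if "F \<in> borel_measurable (muX V B)" for F
    using that assms(1,4) unfolding muX_def VB
    by (intro product_nn_integral_insert_insert) (auto simp: R_def)
  have "y \<in> space (SX V B)" if "y \<in> space (Pi\<^sub>M R (\<lambda>_. expo1))" for y
    using that by (auto simp: SX_def space_PiM PiE_def extensional_def R_def)
  then show ?thesis
    using assms(5,6) by (simp add: split eq cong: nn_integral_cong)
qed

lemma H_op_fun_upd:
  "H_op V i j v s = s(i := if i \<in> V then v * s i + (1 - v) * s j else s i,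
    j := if j \<in> V then v * s i + (1 - v) * s j else s j)"
  by (auto simp: H_op_def fun_eq_iff)

lemma measurable_H_op [measurable]:
  "i \<in> V \<union> B \<Longrightarrow> j \<in> V \<union> B \<Longrightarrow> (\<lambda>(s, v). H_op V i j v s) \<in> SX V B \<Otimes>\<^sub>M borel \<rightarrow>\<^sub>M SX V B"
  unfolding H_op_fun_upd by measurable

lemma measurable_H_bulk [measurable]:
  "i \<in> V \<union> B \<Longrightarrow> j \<in> V \<union> B \<Longrightarrow> (\<lambda>(xs, u). H_bulk i j u xs) \<in> SXT V B \<Otimes>\<^sub>M borel \<rightarrow>\<^sub>M SXT V B"
  unfolding H_bulk_def Tbar_def by measurable

lemma measurable_H_bdry [measurable]:
  "i \<in> V \<union> B \<Longrightarrow> j \<in> V \<union> B \<Longrightarrow>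
    (\<lambda>(xs, z). H_bdry i j (fst z) (snd z) xs) \<in> SXT V B \<Otimes>\<^sub>M (borel \<Otimes>\<^sub>M borel) \<rightarrow>\<^sub>M SXT V B"
  unfolding H_bdry_def Tbar_def by measurable

lemma H_bulk_fun_upd:
  assumes "i \<in> V" "j \<in> V" "i \<noteq> j" "a + b \<noteq> 0"
  shows "H_bulk i j u (y(i := a, j := b), s) =
    (y(i := u * (a + b), j := (1 - u) * (a + b)), H_op V i j (a / (a + b)) s)"
proof -
  have "b * t / (a + b) = (1 - a / (a + b)) * t" for t
    using assms(4) by (simp add: field_simps)
  then show ?thesis
    using assms by (auto simp: H_bulk_def H_op_def Tbar_def fun_eq_iff)
qed

lemma H_bdry_fun_upd:
  assumes "i \<in> V" "j \<notin> V" "i \<noteq> j" "a + b \<noteq> 0"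
  shows "H_bdry i j c u (y(i := a, j := b), s) = (y(i := u * (a + b), j := c), H_op V i j (a / (a + b)) s)"
proof -
  have "b * t / (a + b) = (1 - a / (a + b)) * t" for t
    using assms(4) by (simp add: field_simps)
  then show ?thesis
    using assms by (auto simp: H_bdry_def H_op_def Tbar_def fun_eq_iff)
qed

section \<open>Intertwining of one step\<close>

lemma nn_integral_muX_H_bulk:
  assumes "finite (V \<union> B)" "i \<in> V" "j \<in> V" "i \<noteq> j" "s \<in> space (SX V B)"
    and [measurable]: "g \<in> borel_measurable (SXT V B)"
  shows "(\<integral>\<^sup>+x. \<integral>\<^sup>+u. g (H_bulk i j u (x, s)) \<partial>unif01 \<partial>muX V B) =
    (\<integral>\<^sup>+x. \<integral>\<^sup>+v. g (x, H_op V i j v s) \<partial>unif01 \<partial>muX V B)"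
proof (rule nn_integral_muX_eqI_pair[of V B i j])
  have ij: "i \<in> V \<union> B" "j \<in> V \<union> B"
    using assms by auto
  then show "(\<lambda>x. \<integral>\<^sup>+u. g (H_bulk i j u (x, s)) \<partial>unif01) \<in> borel_measurable (muX V B)"
    "(\<lambda>x. \<integral>\<^sup>+v. g (x, H_op V i j v s) \<partial>unif01) \<in> borel_measurable (muX V B)"
    using assms(5) by measurable
  fix y assume "y \<in> space (SX V B)"
  define h where "h a b v = g (y(i := a, j := b), H_op V i j v s)" for a b v
  have [measurable]: "(\<lambda>(a, b, v). h a b v) \<in> borel_measurable (borel \<Otimes>\<^sub>M borel \<Otimes>\<^sub>M borel)"
    unfolding h_def using ij \<open>y \<in> space (SX V B)\<close>[unfolded SX_def] assms(5) by measurable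
  have "(\<integral>\<^sup>+a. \<integral>\<^sup>+b. \<integral>\<^sup>+u. g (H_bulk i j u (y(i := a, j := b), s)) \<partial>unif01 \<partial>expo1 \<partial>expo1) =
      (\<integral>\<^sup>+a. \<integral>\<^sup>+b. \<integral>\<^sup>+u. h (u * (a + b)) ((1 - u) * (a + b)) (a / (a + b)) \<partial>unif01 \<partial>expo1 \<partial>expo1)"
    using assms by (intro nn_integral_expo1_pair_cong) (simp add: h_def H_bulk_fun_upd)
  also have "\<dots> = (\<integral>\<^sup>+a. \<integral>\<^sup>+b. \<integral>\<^sup>+v. h a b v \<partial>unif01 \<partial>expo1 \<partial>expo1)"
    by (rule nn_integral_expo1_resample) measurable
  finally show "(\<integral>\<^sup>+a. \<integral>\<^sup>+b. \<integral>\<^sup>+u. g (H_bulk i j u (y(i := a, j := b), s)) \<partial>unif01 \<partial>expo1 \<partial>expo1) =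
      (\<integral>\<^sup>+a. \<integral>\<^sup>+b. \<integral>\<^sup>+v. g (y(i := a, j := b), H_op V i j v s) \<partial>unif01 \<partial>expo1 \<partial>expo1)"
    by (simp add: h_def)
qed (use assms in auto)

lemma nn_integral_muX_H_bdry:
  assumes "finite (V \<union> B)" "i \<in> V" "j \<in> B" "j \<notin> V" "i \<noteq> j" "s \<in> space (SX V B)"
    and [measurable]: "g \<in> borel_measurable (SXT V B)"
  shows "(\<integral>\<^sup>+x. \<integral>\<^sup>+z. g (H_bdry i j (fst z) (snd z) (x, s)) \<partial>(expo1 \<Otimes>\<^sub>M unif01) \<partial>muX V B) =
    (\<integral>\<^sup>+x. \<integral>\<^sup>+v. g (x, H_op V i j v s) \<partial>unif01 \<partial>muX V B)"
proof (rule nn_integral_muX_eqI_pair[of V B i j])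
  have ij: "i \<in> V \<union> B" "j \<in> V \<union> B"
    using assms by auto
  then show "(\<lambda>x. \<integral>\<^sup>+z. g (H_bdry i j (fst z) (snd z) (x, s)) \<partial>(expo1 \<Otimes>\<^sub>M unif01)) \<in> borel_measurable (muX V B)"
    "(\<lambda>x. \<integral>\<^sup>+v. g (x, H_op V i j v s) \<partial>unif01) \<in> borel_measurable (muX V B)"
    using assms(6) by measurable
  fix y assume "y \<in> space (SX V B)"
  define G where "G a c v = g (y(i := a, j := c), H_op V i j v s)" for a c v
  have [measurable]: "(\<lambda>(a, c, v). G a c v) \<in> borel_measurable (borel \<Otimes>\<^sub>M borel \<Otimes>\<^sub>M borel)"
    unfolding G_def using ij \<open>y \<in> space (SX V B)\<close>[unfolded SX_def] assms(6) by measurable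
  have "(\<integral>\<^sup>+a. \<integral>\<^sup>+b. \<integral>\<^sup>+z. g (H_bdry i j (fst z) (snd z) (y(i := a, j := b), s)) \<partial>(expo1 \<Otimes>\<^sub>M unif01) \<partial>expo1 \<partial>expo1) =
      (\<integral>\<^sup>+a. \<integral>\<^sup>+b. \<integral>\<^sup>+z. G (snd z * (a + b)) (fst z) (a / (a + b)) \<partial>(expo1 \<Otimes>\<^sub>M unif01) \<partial>expo1 \<partial>expo1)"
    using assms by (intro nn_integral_expo1_pair_cong) (simp add: G_def H_bdry_fun_upd)
  also have "\<dots> = (\<integral>\<^sup>+a. \<integral>\<^sup>+c. \<integral>\<^sup>+v. G a c v \<partial>unif01 \<partial>expo1 \<partial>expo1)"
    by (rule nn_integral_expo1_resample_refresh) measurable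
  finally show "(\<integral>\<^sup>+a. \<integral>\<^sup>+b. \<integral>\<^sup>+z. g (H_bdry i j (fst z) (snd z) (y(i := a, j := b), s)) \<partial>(expo1 \<Otimes>\<^sub>M unif01) \<partial>expo1 \<partial>expo1) =
      (\<integral>\<^sup>+a. \<integral>\<^sup>+b. \<integral>\<^sup>+v. g (y(i := a, j := b), H_op V i j v s) \<partial>unif01 \<partial>expo1 \<partial>expo1)"
    by (simp add: G_def)
qed (use assms in auto)

definition edge_kernel_XT :: "'v set \<Rightarrow> 'v set \<Rightarrow> 'v \<times> 'v \<Rightarrow>
    ('v \<Rightarrow> real) \<times> ('v \<Rightarrow> real) \<Rightarrow> (('v \<Rightarrow> real) \<times> ('v \<Rightarrow> real)) measure" where
  "edge_kernel_XT V B = (\<lambda>(i, j) xs.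
     if j \<in> B then distr (expo1 \<Otimes>\<^sub>M unif01) (SXT V B) (\<lambda>(b, u). H_bdry i j b u xs)
     else distr unif01 (SXT V B) (\<lambda>u. H_bulk i j u xs))"

definition edge_kernel_O :: "'v set \<Rightarrow> 'v set \<Rightarrow> 'v \<times> 'v \<Rightarrow> ('v \<Rightarrow> real) \<Rightarrow> ('v \<Rightarrow> real) measure" where
  "edge_kernel_O V B = (\<lambda>(i, j) s. distr unif01 (SX V B) (\<lambda>v. H_op V i j v s))"

lemma K_XT_eq_uniform_jump: "K_XT V B Ebar = uniform_jump (SXT V B) Ebar (edge_kernel_XT V B)"
  unfolding K_XT_def uniform_jump_def edge_kernel_XT_def
  by (intro ext bind_cong refl) (auto split: option.split)

lemma K_O_eq_uniform_jump: "K_O V B Ebar = uniform_jump (SX V B) Ebar (edge_kernel_O V B)"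
  unfolding K_O_def uniform_jump_def edge_kernel_O_def
  by (intro ext bind_cong refl) (auto split: option.split)

lemma edge_kernel_XT_in_subprob_algebra: "edge_kernel_XT V B e xs \<in> space (subprob_algebra (SXT V B))"
  using space_SX_not_empty[of V B]
  by (auto simp: edge_kernel_XT_def space_subprob_algebra SXT_def space_pair_measure split: prod.split
      intro!: subprob_space_distr_prob_space prob_space_unif01 prob_space_pair prob_space_expo1)

lemma edge_kernel_O_in_subprob_algebra: "edge_kernel_O V B e s \<in> space (subprob_algebra (SX V B))"
  using space_SX_not_empty[of V B]
  by (auto simp: edge_kernel_O_def space_subprob_algebra split: prod.split
      intro!: subprob_space_distr_prob_space prob_space_unif01)

lemma nn_integral_edge_kernel_XT:
  assumes "i \<in> V \<union> B" "j \<in> V \<union> B" "xs \<in> space (SXT V B)" and [measurable]: "g \<in> borel_measurable (SXT V B)"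
  shows "(\<integral>\<^sup>+z. g z \<partial>edge_kernel_XT V B (i, j) xs) =
    (if j \<in> B then \<integral>\<^sup>+z. g (H_bdry i j (fst z) (snd z) xs) \<partial>(expo1 \<Otimes>\<^sub>M unif01)
     else \<integral>\<^sup>+u. g (H_bulk i j u xs) \<partial>unif01)"
proof -
  have "(\<lambda>z. H_bdry i j (fst z) (snd z) xs) \<in> expo1 \<Otimes>\<^sub>M unif01 \<rightarrow>\<^sub>M SXT V B"
    using assms(1-3) by measurable
  moreover have "(\<lambda>u. H_bulk i j u xs) \<in> unif01 \<rightarrow>\<^sub>M SXT V B"
    using assms(1-3) by measurable
  ultimately show ?thesis
    by (simp add: edge_kernel_XT_def nn_integral_distr split_beta')
qed

lemma nn_integral_edge_kernel_O:
  assumes "i \<in> V \<union> B" "j \<in> V \<union> B" "s \<in> space (SX V B)" and [measurable]: "g \<in> borel_measurable (SX V B)"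
  shows "(\<integral>\<^sup>+z. g z \<partial>edge_kernel_O V B (i, j) s) = (\<integral>\<^sup>+v. g (H_op V i j v s) \<partial>unif01)"
proof -
  have "(\<lambda>v. H_op V i j v s) \<in> unif01 \<rightarrow>\<^sub>M SX V B"
    using assms(1-3) by measurable
  then show ?thesis
    by (simp add: edge_kernel_O_def nn_integral_distr)
qed

lemma measurable_edge_kernel_XT:
  assumes "graph_ok V B Ebar" "e \<in> Ebar"
  shows "edge_kernel_XT V B e \<in> SXT V B \<rightarrow>\<^sub>M prob_algebra (SXT V B)"
proof -
  obtain i j where e: "e = (i, j)"
    by (cases e)
  then have "i \<in> V \<union> B" "j \<in> V \<union> B"
    using graph_okD(4)[OF assms(1)] assms(2) by auto
  then show ?thesis
    unfolding e edge_kernel_XT_def by (cases "j \<in> B") (simp_all, measurable)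
qed

lemma measurable_edge_kernel_O:
  assumes "graph_ok V B Ebar" "e \<in> Ebar"
  shows "edge_kernel_O V B e \<in> SX V B \<rightarrow>\<^sub>M prob_algebra (SX V B)"
proof -
  obtain i j where e: "e = (i, j)"
    by (cases e)
  then have "i \<in> V \<union> B" "j \<in> V \<union> B"
    using graph_okD(4)[OF assms(1)] assms(2) by auto
  then show ?thesis
    unfolding e edge_kernel_O_def by simp measurable
qed

lemma edge_kernel_XT_intertwining:
  assumes G: "graph_ok V B Ebar" and "e \<in> Ebar" and s: "s \<in> space (SX V B)"
    and g[measurable]: "g \<in> borel_measurable (SXT V B)"
  shows "(\<integral>\<^sup>+x. \<integral>\<^sup>+z. g z \<partial>edge_kernel_XT V B e (x, s) \<partial>muX V B) =
    (\<integral>\<^sup>+s'. \<integral>\<^sup>+x. g (x, s') \<partial>muX V B \<partial>edge_kernel_O V B e s)"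
proof -
  obtain i j where e: "e = (i, j)"
    by (cases e)
  have ij: "i \<in> V" "j \<in> V \<union> B" "i \<noteq> j" and IJ: "i \<in> V \<union> B" "j \<in> V \<union> B"
    using graph_okD(4)[OF G] \<open>e \<in> Ebar\<close> by (auto simp: e)
  note fin = graph_okD(1)[OF G]
  have xs: "(x, s) \<in> space (SXT V B)" if "x \<in> space (muX V B)" for x
    using that s by (simp add: SXT_def space_pair_measure space_muX)
  have "(\<lambda>s'. \<integral>\<^sup>+x. g (x, s') \<partial>muX V B) \<in> borel_measurable (SX V B)"
    by measurable
  then have "(\<integral>\<^sup>+s'. \<integral>\<^sup>+x. g (x, s') \<partial>muX V B \<partial>edge_kernel_O V B e s) =
      (\<integral>\<^sup>+v. \<integral>\<^sup>+x. g (x, H_op V i j v s) \<partial>muX V B \<partial>unif01)"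
    unfolding e by (rule nn_integral_edge_kernel_O[OF IJ s])
  also have "\<dots> = (\<integral>\<^sup>+x. \<integral>\<^sup>+v. g (x, H_op V i j v s) \<partial>unif01 \<partial>muX V B)"
    using IJ s by (intro muX_unif01.Fubini') measurable
  also have "\<dots> = (\<integral>\<^sup>+x. \<integral>\<^sup>+z. g z \<partial>edge_kernel_XT V B e (x, s) \<partial>muX V B)"
  proof (cases "j \<in> B")
    case True
    then have "j \<notin> V"
      using graph_okD(3)[OF G] by auto
    show ?thesis
      unfolding nn_integral_muX_H_bdry[OF fin ij(1) True \<open>j \<notin> V\<close> ij(3) s g, symmetric]
      using True by (intro nn_integral_cong) (simp add: e nn_integral_edge_kernel_XT[OF IJ xs g])
  next
    case False
    then have "j \<in> V"
      using ij(2) by auto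
    show ?thesis
      unfolding nn_integral_muX_H_bulk[OF fin ij(1) \<open>j \<in> V\<close> ij(3) s g, symmetric]
      using False by (intro nn_integral_cong) (simp add: e nn_integral_edge_kernel_XT[OF IJ xs g])
  qed
  finally show ?thesis ..
qed

lemma measurable_K_XT: "graph_ok V B Ebar \<Longrightarrow> K_XT V B Ebar \<in> SXT V B \<rightarrow>\<^sub>M prob_algebra (SXT V B)"
  unfolding K_XT_eq_uniform_jump
  by (intro measurable_uniform_jump graph_okD(2) measurable_edge_kernel_XT edge_kernel_XT_in_subprob_algebra)

lemma measurable_K_O: "graph_ok V B Ebar \<Longrightarrow> K_O V B Ebar \<in> SX V B \<rightarrow>\<^sub>M prob_algebra (SX V B)"
  unfolding K_O_eq_uniform_jump
  by (intro measurable_uniform_jump graph_okD(2) measurable_edge_kernel_O edge_kernel_O_in_subprob_algebra)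

lemma measurable_K_XT_muX:
  "graph_ok V B Ebar \<Longrightarrow> K_XT V B Ebar \<in> muX V B \<Otimes>\<^sub>M SX V B \<rightarrow>\<^sub>M prob_algebra (muX V B \<Otimes>\<^sub>M SX V B)"
  unfolding prob_algebra_cong[OF sets_muX_pair[OF refl]]
  by (simp add: measurable_K_XT measurable_cong_sets[OF sets_muX_pair[OF refl] refl])

lemma K_XT_intertwining_nn_integral:
  assumes G: "graph_ok V B Ebar" and s: "s \<in> space (SX V B)" and g[measurable]: "g \<in> borel_measurable (SXT V B)"
  shows "(\<integral>\<^sup>+x. \<integral>\<^sup>+z. g z \<partial>K_XT V B Ebar (x, s) \<partial>muX V B) =
    (\<integral>\<^sup>+s'. \<integral>\<^sup>+x. g (x, s') \<partial>muX V B \<partial>K_O V B Ebar s)"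
proof -
  define c :: ennreal where "c = 1 + of_nat (card Ebar)"
  define g' where "g' s' = (\<integral>\<^sup>+x. g (x, s') \<partial>muX V B)" for s'
  have [measurable]: "g' \<in> borel_measurable (SX V B)"
    unfolding g'_def by measurable
  have xs[measurable]: "(\<lambda>x. (x, s)) \<in> muX V B \<rightarrow>\<^sub>M SXT V B"
    using s by measurable
  have jump_meas: "(\<lambda>x. \<integral>\<^sup>+z. g z \<partial>edge_kernel_XT V B e (x, s)) \<in> borel_measurable (muX V B)" if "e \<in> Ebar" for e
    using measurable_compose[OF xs measurable_prob_algebraD[OF measurable_edge_kernel_XT[OF G that]]]
    by (rule measurable_compose) (rule nn_integral_measurable_subprob_algebra[OF g])
  have "(\<integral>\<^sup>+x. \<integral>\<^sup>+z. g z \<partial>K_XT V B Ebar (x, s) \<partial>muX V B) =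
      (\<integral>\<^sup>+x. (g (x, s) + (\<Sum>e\<in>Ebar. \<integral>\<^sup>+z. g z \<partial>edge_kernel_XT V B e (x, s))) * inverse c \<partial>muX V B)"
    using measurable_space[OF xs] graph_okD(2)[OF G]
    by (intro nn_integral_cong)
      (simp add: K_XT_eq_uniform_jump nn_integral_uniform_jump edge_kernel_XT_in_subprob_algebra c_def divide_ennreal_def)
  also have "\<dots> = ((\<integral>\<^sup>+x. g (x, s) \<partial>muX V B) +
      (\<Sum>e\<in>Ebar. \<integral>\<^sup>+x. \<integral>\<^sup>+z. g z \<partial>edge_kernel_XT V B e (x, s) \<partial>muX V B)) * inverse c"
    using jump_meas s by (simp add: nn_integral_multc nn_integral_add nn_integral_sum borel_measurable_sum)
  also have "\<dots> = (g' s + (\<Sum>e\<in>Ebar. \<integral>\<^sup>+s'. g' s' \<partial>edge_kernel_O V B e s)) * inverse c"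
    unfolding g'_def using G s by (simp add: edge_kernel_XT_intertwining)
  also have "\<dots> = (\<integral>\<^sup>+s'. g' s' \<partial>K_O V B Ebar s)"
    using s graph_okD(2)[OF G]
    by (simp add: K_O_eq_uniform_jump nn_integral_uniform_jump edge_kernel_O_in_subprob_algebra c_def divide_ennreal_def)
  finally show ?thesis
    unfolding g'_def .
qed

lemma K_XT_intertwining:
  assumes G: "graph_ok V B Ebar" and s: "s \<in> space (SX V B)"
  shows "(muX V B \<Otimes>\<^sub>M return (SX V B) s) \<bind> K_XT V B Ebar = muX V B \<Otimes>\<^sub>M K_O V B Ebar s"
proof (rule measure_eqI)
  have KX: "K_XT V B Ebar \<in> muX V B \<Otimes>\<^sub>M SX V B \<rightarrow>\<^sub>M subprob_algebra (muX V B \<Otimes>\<^sub>M SX V B)"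
    by (rule measurable_prob_algebraD[OF measurable_K_XT_muX[OF G]])
  have KO: "K_O V B Ebar s \<in> space (prob_algebra (SX V B))"
    using measurable_space[OF measurable_K_O[OF G] s] .
  then interpret KO: prob_space "K_O V B Ebar s"
    by (simp add: space_prob_algebra)
  interpret pair_sigma_finite "muX V B" "K_O V B Ebar s" ..
  have sets_LHS: "sets ((muX V B \<Otimes>\<^sub>M return (SX V B) s) \<bind> K_XT V B Ebar) = sets (muX V B \<Otimes>\<^sub>M SX V B)"
    using KX s space_SX_not_empty[of V B]
    by (intro sets_bind_measurable)
      (simp_all add: space_pair_measure space_muX measurable_cong_sets[OF sets_pair_measure_cong[OF refl sets_return] refl])
  have sets_RHS: "sets (muX V B \<Otimes>\<^sub>M K_O V B Ebar s) = sets (muX V B \<Otimes>\<^sub>M SX V B)"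
    using KO by (intro sets_pair_measure_cong) (simp_all add: space_prob_algebra)
  show "sets ((muX V B \<Otimes>\<^sub>M return (SX V B) s) \<bind> K_XT V B Ebar) = sets (muX V B \<Otimes>\<^sub>M K_O V B Ebar s)"
    unfolding sets_LHS sets_RHS ..
  fix A assume "A \<in> sets ((muX V B \<Otimes>\<^sub>M return (SX V B) s) \<bind> K_XT V B Ebar)"
  then have A: "A \<in> sets (muX V B \<Otimes>\<^sub>M SX V B)"
    using sets_LHS by simp
  have "emeasure ((muX V B \<Otimes>\<^sub>M return (SX V B) s) \<bind> K_XT V B Ebar) A =
      (\<integral>\<^sup>+z. indicator A z \<partial>((muX V B \<Otimes>\<^sub>M return (SX V B) s) \<bind> K_XT V B Ebar))"
    using A sets_LHS by simp
  also have "\<dots> = (\<integral>\<^sup>+x. \<integral>\<^sup>+z. indicator A z \<partial>K_XT V B Ebar (x, s) \<partial>muX V B)"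
    using A by (intro nn_integral_bind_pair_return[OF s KX]) simp
  also have "\<dots> = (\<integral>\<^sup>+s'. \<integral>\<^sup>+x. indicator A (x, s') \<partial>muX V B \<partial>K_O V B Ebar s)"
    using A sets_muX_pair[OF refl, of V B]
    by (intro K_XT_intertwining_nn_integral G s) (simp cong: measurable_cong_sets)
  also have "\<dots> = emeasure (muX V B \<Otimes>\<^sub>M K_O V B Ebar s) A"
    using A sets_RHS by (subst nn_integral_snd) (simp_all cong: measurable_cong_sets)
  finally show "emeasure ((muX V B \<Otimes>\<^sub>M return (SX V B) s) \<bind> K_XT V B Ebar) A =
      emeasure (muX V B \<Otimes>\<^sub>M K_O V B Ebar s) A" .
qed

section \<open>Intertwining of the semigroups\<close>

lemma unif_rate_nonneg: "0 \<le> t \<Longrightarrow> 0 \<le> unif_rate Ebar * t"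
  by (simp add: unif_rate_def)

lemma P_XT_intertwining:
  assumes G: "graph_ok V B Ebar" and "0 \<le> t" and \<mu>: "\<mu> \<in> space (prob_algebra (SX V B))"
  shows "P_XT V B Ebar t (muX V B \<Otimes>\<^sub>M \<mu>) = muX V B \<Otimes>\<^sub>M P_O V B Ebar t \<mu>"
  unfolding P_XT_def P_O_def
  by (rule semigroup_intertwining[OF prob_space_muX measurable_K_XT_muX[OF G] measurable_K_O[OF G]
        K_XT_intertwining[OF G] unif_rate_nonneg[OF \<open>0 \<le> t\<close>] \<mu>])

lemma measurable_P_XT_return:
  "graph_ok V B Ebar \<Longrightarrow> 0 \<le> t \<Longrightarrow>
    (\<lambda>y. P_XT V B Ebar t (return (SXT V B) y)) \<in> SXT V B \<rightarrow>\<^sub>M prob_algebra (SXT V B)"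
  unfolding P_XT_def by (intro measurable_semigroup_return measurable_K_XT unif_rate_nonneg)

lemma P_XT_intertwining_nn_integral:
  assumes G: "graph_ok V B Ebar" and "0 \<le> t" and s: "s \<in> space (SX V B)"
    and g: "g \<in> borel_measurable (SXT V B)"
  shows "(\<integral>\<^sup>+x. \<integral>\<^sup>+z. g z \<partial>P_XT V B Ebar t (return (SXT V B) (x, s)) \<partial>muX V B) =
    (\<integral>\<^sup>+s'. \<integral>\<^sup>+x. g (x, s') \<partial>muX V B \<partial>P_O V B Ebar t (return (SX V B) s))"
proof -
  let ?\<delta> = "return (SX V B) s"
  let ?PX = "\<lambda>y. P_XT V B Ebar t (return (SXT V B) y)"
  have PX: "?PX \<in> muX V B \<Otimes>\<^sub>M SX V B \<rightarrow>\<^sub>M subprob_algebra (SXT V B)"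
    using measurable_prob_algebraD[OF measurable_P_XT_return[OF G \<open>0 \<le> t\<close>]]
    by (simp add: measurable_cong_sets[OF sets_muX_pair[OF refl] refl])
  have \<delta>: "?\<delta> \<in> space (prob_algebra (SX V B))"
    using s by (simp add: space_prob_algebra prob_space_return)
  have M0: "muX V B \<Otimes>\<^sub>M ?\<delta> \<in> space (prob_algebra (SXT V B))"
    using s sets_muX_pair[of ?\<delta>] by (simp add: space_prob_algebra prob_space_pair prob_space_muX prob_space_return)
  have PO: "P_O V B Ebar t ?\<delta> \<in> space (prob_algebra (SX V B))"
    unfolding P_O_def by (intro semigroup_in_prob_algebra measurable_K_O G unif_rate_nonneg \<open>0 \<le> t\<close> \<delta>)
  then interpret PO: prob_space "P_O V B Ebar t ?\<delta>"
    by (simp add: space_prob_algebra)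
  interpret muX_PO: pair_sigma_finite "muX V B" "P_O V B Ebar t ?\<delta>" ..
  have "(\<integral>\<^sup>+x. \<integral>\<^sup>+z. g z \<partial>?PX (x, s) \<partial>muX V B) = (\<integral>\<^sup>+z. g z \<partial>((muX V B \<Otimes>\<^sub>M ?\<delta>) \<bind> ?PX))"
    by (rule nn_integral_bind_pair_return[OF s PX g, symmetric])
  also have "(muX V B \<Otimes>\<^sub>M ?\<delta>) \<bind> ?PX = P_XT V B Ebar t (muX V B \<Otimes>\<^sub>M ?\<delta>)"
    unfolding P_XT_def
    by (intro semigroup_eq_bind_return[symmetric] measurable_K_XT G unif_rate_nonneg \<open>0 \<le> t\<close> M0)
  also have "\<dots> = muX V B \<Otimes>\<^sub>M P_O V B Ebar t ?\<delta>"
    by (rule P_XT_intertwining[OF G \<open>0 \<le> t\<close> \<delta>])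
  also have "(\<integral>\<^sup>+z. g z \<partial>(muX V B \<Otimes>\<^sub>M P_O V B Ebar t ?\<delta>)) =
      (\<integral>\<^sup>+s'. \<integral>\<^sup>+x. g (x, s') \<partial>muX V B \<partial>P_O V B Ebar t ?\<delta>)"
    using PO g by (intro muX_PO.nn_integral_snd[symmetric])
      (simp add: space_prob_algebra measurable_cong_sets[OF sets_muX_pair refl])
  finally show ?thesis .
qed

lemma measurable_fdd_chain_P_XT:
  assumes G: "graph_ok V B Ebar"
  shows "sorted (map fst tfs) \<Longrightarrow> (\<forall>(t, f) \<in> set tfs. \<tau> \<le> t \<and> f \<in> borel_measurable (SX V B)) \<Longrightarrow>
    fdd_chain (P_XT V B Ebar) (SXT V B) (map (\<lambda>(t, f). (t, f \<circ> snd)) tfs) \<tau> \<in> borel_measurable (SXT V B)"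
proof (induction tfs arbitrary: \<tau>)
  case (Cons tf tfs)
  obtain t f where tf: "tf = (t, f)"
    by (cases tf)
  have [measurable]: "f \<in> borel_measurable (SX V B)" and "0 \<le> t - \<tau>"
    using Cons.prems tf by auto
  have [measurable]: "fdd_chain (P_XT V B Ebar) (SXT V B) (map (\<lambda>(t, f). (t, f \<circ> snd)) tfs) t \<in> borel_measurable (SXT V B)"
    using Cons.prems tf by (intro Cons.IH) auto
  have "(\<lambda>z. f (snd z) * fdd_chain (P_XT V B Ebar) (SXT V B) (map (\<lambda>(t, f). (t, f \<circ> snd)) tfs) t z)
      \<in> borel_measurable (SXT V B)"
    by measurable
  from measurable_compose[OF measurable_prob_algebraD[OF measurable_P_XT_return[OF G \<open>0 \<le> t - \<tau>\<close>]]
      nn_integral_measurable_subprob_algebra[OF this]]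
  show ?case
    by (simp add: tf comp_def)
next
  case Nil
  have "fdd_chain (P_XT V B Ebar) (SXT V B) [] \<tau> = (\<lambda>_. 1)"
    by (rule ext) simp
  then show ?case
    by simp
qed

lemma fdd_chain_intertwining:
  assumes G: "graph_ok V B Ebar"
  shows "sorted (map fst tfs) \<Longrightarrow> (\<forall>(t, f) \<in> set tfs. \<tau> \<le> t \<and> f \<in> borel_measurable (SX V B)) \<Longrightarrow>
    s \<in> space (SX V B) \<Longrightarrow>
    (\<integral>\<^sup>+x. fdd_chain (P_XT V B Ebar) (SXT V B) (map (\<lambda>(t, f). (t, f \<circ> snd)) tfs) \<tau> (x, s) \<partial>muX V B) =
      fdd_chain (P_O V B Ebar) (SX V B) tfs \<tau> s"
proof (induction tfs arbitrary: \<tau> s)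
  case (Cons tf tfs)
  obtain t f where tf: "tf = (t, f)"
    by (cases tf)
  have f[measurable]: "f \<in> borel_measurable (SX V B)" and "0 \<le> t - \<tau>"
    using Cons.prems tf by auto
  have prems: "sorted (map fst tfs)" "\<forall>(t', f') \<in> set tfs. t \<le> t' \<and> f' \<in> borel_measurable (SX V B)"
    using Cons.prems tf by auto
  let ?CX = "fdd_chain (P_XT V B Ebar) (SXT V B) (map (\<lambda>(t, f). (t, f \<circ> snd)) tfs) t"
  have [measurable]: "?CX \<in> borel_measurable (SXT V B)"
    by (rule measurable_fdd_chain_P_XT[OF G prems])
  let ?PO = "P_O V B Ebar (t - \<tau>) (return (SX V B) s)"
  have sets_PO: "sets ?PO = sets (SX V B)"
    using semigroup_in_prob_algebra[OF measurable_K_O[OF G] unif_rate_nonneg[OF \<open>0 \<le> t - \<tau>\<close>, of Ebar],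
        of "return (SX V B) s"] Cons.prems(3)
    by (simp add: P_O_def space_prob_algebra prob_space_return)
  have "(\<integral>\<^sup>+x. \<integral>\<^sup>+z. f (snd z) * ?CX z \<partial>P_XT V B Ebar (t - \<tau>) (return (SXT V B) (x, s)) \<partial>muX V B) =
      (\<integral>\<^sup>+s'. \<integral>\<^sup>+x. f s' * ?CX (x, s') \<partial>muX V B \<partial>?PO)"
  proof -
    have "(\<lambda>z. f (snd z) * ?CX z) \<in> borel_measurable (SXT V B)"
      by measurable
    from P_XT_intertwining_nn_integral[OF G \<open>0 \<le> t - \<tau>\<close> Cons.prems(3) this] show ?thesis
      by simp
  qed
  also have "\<dots> = (\<integral>\<^sup>+s'. f s' * fdd_chain (P_O V B Ebar) (SX V B) tfs t s' \<partial>?PO)"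
  proof (rule nn_integral_cong)
    fix s' assume "s' \<in> space ?PO"
    then have s': "s' \<in> space (SX V B)"
      using sets_eq_imp_space_eq[OF sets_PO] by simp
    then have CX_s': "(\<lambda>x. ?CX (x, s')) \<in> borel_measurable (muX V B)"
      by measurable
    then show "(\<integral>\<^sup>+x. f s' * ?CX (x, s') \<partial>muX V B) = f s' * fdd_chain (P_O V B Ebar) (SX V B) tfs t s'"
      by (simp only: nn_integral_cmult[OF CX_s'] Cons.IH[OF prems s'])
  qed
  finally show ?case
    by (simp add: tf comp_def)
qed (simp add: muX.emeasure_space_1)

lemma nn_integral_fdd_chain_intertwining:
  assumes G: "graph_ok V B Ebar" and \<nu>: "\<nu> \<in> space (prob_algebra (SX V B))"
    and tfs: "sorted (map fst tfs)" "\<forall>(t, f) \<in> set tfs. 0 \<le> t \<and> f \<in> borel_measurable (SX V B)"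
  shows "(\<integral>\<^sup>+xs. fdd_chain (P_XT V B Ebar) (SXT V B) (map (\<lambda>(t, f). (t, f \<circ> snd)) tfs) 0 xs \<partial>(muX V B \<Otimes>\<^sub>M \<nu>)) =
    (\<integral>\<^sup>+s. fdd_chain (P_O V B Ebar) (SX V B) tfs 0 s \<partial>\<nu>)"
proof -
  interpret \<nu>: prob_space \<nu>
    using \<nu> by (simp add: space_prob_algebra)
  interpret muX_\<nu>: pair_prob_space "muX V B" \<nu> ..
  have sets_\<nu>: "sets \<nu> = sets (SX V B)"
    using \<nu> by (simp add: space_prob_algebra)
  have "fdd_chain (P_XT V B Ebar) (SXT V B) (map (\<lambda>(t, f). (t, f \<circ> snd)) tfs) 0 \<in> borel_measurable (muX V B \<Otimes>\<^sub>M \<nu>)"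
    using measurable_fdd_chain_P_XT[OF G tfs] by (simp add: measurable_cong_sets[OF sets_muX_pair[OF sets_\<nu>] refl])
  then have "(\<integral>\<^sup>+xs. fdd_chain (P_XT V B Ebar) (SXT V B) (map (\<lambda>(t, f). (t, f \<circ> snd)) tfs) 0 xs \<partial>(muX V B \<Otimes>\<^sub>M \<nu>)) =
      (\<integral>\<^sup>+s. \<integral>\<^sup>+x. fdd_chain (P_XT V B Ebar) (SXT V B) (map (\<lambda>(t, f). (t, f \<circ> snd)) tfs) 0 (x, s) \<partial>muX V B \<partial>\<nu>)"
    by (rule muX_\<nu>.nn_integral_snd[symmetric])
  also have "\<dots> = (\<integral>\<^sup>+s. fdd_chain (P_O V B Ebar) (SX V B) tfs 0 s \<partial>\<nu>)"
    using fdd_chain_intertwining[OF G tfs] sets_eq_imp_space_eq[OF sets_\<nu>] by (intro nn_integral_cong) simp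
  finally show ?thesis .
qed

theorem theorem2p4:
  fixes V B :: "'v set" and Ebar :: "('v \<times> 'v) set" and Tb :: "'v \<Rightarrow> real"
    and \<nu> :: "('v \<Rightarrow> real) measure"
  assumes graph: "graph_ok V B Ebar"
    and Tb_pos: "\<forall>j\<in>B. Tb j > 0"
    and nu_prob: "prob_space \<nu>"
    and nu_sets: "sets \<nu> = sets (SX V B)"
    and nu_supp: "AE s in \<nu>. (\<forall>i\<in>V \<union> B. s i \<ge> 0) \<and> (\<forall>j\<in>B. s j = Tb j)"
  shows
    "(\<forall>t\<ge>0. P_XT V B Ebar t (muX V B \<Otimes>\<^sub>M \<nu>) = muX V B \<Otimes>\<^sub>M P_O V B Ebar t \<nu>) \<and>
     (\<forall>tfs :: (real \<times> (('v \<Rightarrow> real) \<Rightarrow> ennreal)) list.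
        sorted (map fst tfs) \<and> (\<forall>(t, f) \<in> set tfs. t \<ge> 0 \<and> f \<in> borel_measurable (SX V B)) \<longrightarrow>
        (\<integral>\<^sup>+ xs. fdd_chain (P_XT V B Ebar) (SXT V B) (map (\<lambda>(t, f). (t, f \<circ> snd)) tfs) 0 xs
             \<partial>(muX V B \<Otimes>\<^sub>M \<nu>))
        = (\<integral>\<^sup>+ s. fdd_chain (P_O V B Ebar) (SX V B) tfs 0 s \<partial>\<nu>))"
proof (intro conjI allI impI)
  \<comment> \<open>The intertwining holds for every initial law of the temperatures.\<close>
  have \<nu>: "\<nu> \<in> space (prob_algebra (SX V B))"
    using nu_prob nu_sets by (simp add: space_prob_algebra)
  show "P_XT V B Ebar t (muX V B \<Otimes>\<^sub>M \<nu>) = muX V B \<Otimes>\<^sub>M P_O V B Ebar t \<nu>" if "0 \<le> t" for t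
    by (rule P_XT_intertwining[OF graph that \<nu>])
  show "(\<integral>\<^sup>+xs. fdd_chain (P_XT V B Ebar) (SXT V B) (map (\<lambda>(t, f). (t, f \<circ> snd)) tfs) 0 xs \<partial>(muX V B \<Otimes>\<^sub>M \<nu>)) =
      (\<integral>\<^sup>+s. fdd_chain (P_O V B Ebar) (SX V B) tfs 0 s \<partial>\<nu>)"
    if "sorted (map fst tfs) \<and> (\<forall>(t, f) \<in> set tfs. t \<ge> 0 \<and> f \<in> borel_measurable (SX V B))" for tfs
    using that by (intro nn_integral_fdd_chain_intertwining[OF graph \<nu>]) auto
qed

end
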